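(* Let $\mathcal C\subseteq\{0,1\}^n$ and $\mathcal D\subseteq\{0,1\}^m$ be neural codes and $\phi:R_\mathcal D\to R_\mathcal C$ a ring homomorphism. Then $\phi$ is a neural ring homomorphism if and only if there is a vector $S=(s_1,\dots,s_m)$ with $s_i\in[n]\cup\{0,u\}$ such that $q_\phi=q_S|_\mathcal C$.
   Context: For a code $\mathcal C\subseteq\{0,1\}^n$, $R_\mathcal C$ is the ring of functions $\mathcal C\to\mathbb F_2$ and $R[n]=R_{\{0,1\}^n}=\mathbb F_2[x_1,\dots,x_n]/\langle x_i^2-x_i\rangle$; $R_\mathcal C$ is an $R[n]$-module via $(r\cdot f)(c)=r(c)f(c)$. $\rho_d$ is the indicator of $\{d\}$, and $q_\phi:\mathcal C\to\mathcal D$ sends $c$ to the unique $d\in\mathcal D$ with $\phi(\rho_d)(c)=1$. A ring homomorphism $\tau:R[m]\to R[n]$ is compatible with $\phi$ if $\phi(r\cdot f)=\tau(r)\cdot\phi(f)$ for all $r\in R[m]$, $f\in R_\mathcal D$; it is linear-monomial if $\tau(x_i)\in\{x_1,\dots,x_n,0,1\}$ for every $i$. $\phi$ is a neural ring homomorphism if some linear-monomial $\tau:R[m]\to R[n]$ is compatible with $\phi$. For $S=(s_1,\dots,s_m)$ with $s_i\in[n]\cup\{0,u\}$ ($u$ a formal symbol), $q_S:\{0,1\}^n\to\{0,1\}^m$ is $q_S(c)=d$ with $d_i=c_j$ if $s_i=j$, $d_i=0$ if $s_i=0$, $d_i=1$ if $s_i=u$. *)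

theory Defs
  imports "HOL-Algebra.Ring"
begin

text \<open>Codewords of length n: boolean vectors indexed by 1..n (False = 0, True = 1),
  represented extensionally as functions nat => bool that are False outside {1..n}.\<close>

type_synonym word = "nat \<Rightarrow> bool"

definition cube :: "nat \<Rightarrow> word set" where
  "cube n = {c. \<forall>i. c i \<longrightarrow> i \<in> {1..n}}"

text \<open>R_C: the ring of functions C -> F_2 (F_2 = bool, + = xor, * = and), represented
  extensionally as functions that are False outside C.\<close>

definition code_ring :: "word set \<Rightarrow> (word \<Rightarrow> bool) ring" where
  "code_ring C = \<lparr>carrier = {f. \<forall>c. c \<notin> C \<longrightarrow> \<not> f c},
                  mult = (\<lambda>f g c. f c \<and> g c),
                  one = (\<lambda>c. c \<in> C),
                  zero = (\<lambda>c. False),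
                  add = (\<lambda>f g c. f c \<noteq> g c)\<rparr>"

definition Rn :: "nat \<Rightarrow> (word \<Rightarrow> bool) ring" where
  "Rn n = code_ring (cube n)"

definition xvar :: "nat \<Rightarrow> nat \<Rightarrow> (word \<Rightarrow> bool)" where
  "xvar n i = (\<lambda>c. c \<in> cube n \<and> c i)"

definition act :: "(word \<Rightarrow> bool) \<Rightarrow> (word \<Rightarrow> bool) \<Rightarrow> (word \<Rightarrow> bool)" where
  "act r f = (\<lambda>c. r c \<and> f c)"

definition rho :: "word \<Rightarrow> (word \<Rightarrow> bool)" where
  "rho d = (\<lambda>c. c = d)"

definition q_phi :: "word set \<Rightarrow> ((word \<Rightarrow> bool) \<Rightarrow> (word \<Rightarrow> bool)) \<Rightarrow> word \<Rightarrow> word" where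
  "q_phi D \<phi> c = (THE d. d \<in> D \<and> \<phi> (rho d) c)"

definition compatible ::
  "nat \<Rightarrow> word set \<Rightarrow> ((word \<Rightarrow> bool) \<Rightarrow> (word \<Rightarrow> bool)) \<Rightarrow> ((word \<Rightarrow> bool) \<Rightarrow> (word \<Rightarrow> bool)) \<Rightarrow> bool" where
  "compatible m D \<tau> \<phi> \<longleftrightarrow>
     (\<forall>r \<in> carrier (Rn m). \<forall>f \<in> carrier (code_ring D). \<phi> (act r f) = act (\<tau> r) (\<phi> f))"

definition linear_monomial :: "nat \<Rightarrow> nat \<Rightarrow> ((word \<Rightarrow> bool) \<Rightarrow> (word \<Rightarrow> bool)) \<Rightarrow> bool" where
  "linear_monomial m n \<tau> \<longleftrightarrow>
     (\<forall>i \<in> {1..m}. \<tau> (xvar m i) \<in> {xvar n j | j. j \<in> {1..n}} \<union> {\<zero>\<^bsub>Rn n\<^esub>, \<one>\<^bsub>Rn n\<^esub>})"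

definition neural_ring_hom ::
  "nat \<Rightarrow> nat \<Rightarrow> word set \<Rightarrow> word set \<Rightarrow> ((word \<Rightarrow> bool) \<Rightarrow> (word \<Rightarrow> bool)) \<Rightarrow> bool" where
  "neural_ring_hom n m C D \<phi> \<longleftrightarrow>
     \<phi> \<in> ring_hom (code_ring D) (code_ring C) \<and>
     (\<exists>\<tau>. \<tau> \<in> ring_hom (Rn m) (Rn n) \<and> linear_monomial m n \<tau> \<and> compatible m D \<tau> \<phi>)"

datatype sel = Coord nat | Zero | U

definition valid_S :: "nat \<Rightarrow> nat \<Rightarrow> (nat \<Rightarrow> sel) \<Rightarrow> bool" where
  "valid_S n m S \<longleftrightarrow> (\<forall>i \<in> {1..m}. case S i of Coord j \<Rightarrow> j \<in> {1..n} | Zero \<Rightarrow> True | U \<Rightarrow> True)"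

definition q_S :: "nat \<Rightarrow> (nat \<Rightarrow> sel) \<Rightarrow> word \<Rightarrow> word" where
  "q_S m S c = (\<lambda>i. i \<in> {1..m} \<and> (case S i of Coord j \<Rightarrow> c j | Zero \<Rightarrow> False | U \<Rightarrow> True))"

end

theory Submission
  imports Defs
begin

text \<open>A ring homomorphism \<open>R\<^sub>A \<rightarrow> R\<^sub>B\<close> of function rings over a finite code is evaluation:
  at each \<open>b \<in> B\<close> exactly one indicator \<open>\<rho>\<^sub>a\<close> survives, because the indicators are orthogonal
  idempotents summing to \<open>1\<close>; hence the homomorphism is pulling back along \<open>q\<^sub>\<phi>\<close>. For a
  homomorphism \<open>\<tau> : R[m] \<rightarrow> R[n]\<close> the \<open>i\<close>-th coordinate of \<open>q\<^sub>\<tau>(c)\<close> is \<open>\<tau>(x\<^sub>i)(c)\<close>, so \<open>\<tau>\<close> is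
  linear-monomial exactly when \<open>q\<^sub>\<tau> = q\<^sub>S\<close> on the cube. Compatibility of \<open>\<tau>\<close> with \<open>\<phi>\<close>, tested
  on \<open>\<rho>\<^sub>d \<cdot> 1\<close>, forces \<open>q\<^sub>\<phi> = q\<^sub>\<tau>\<close> on \<open>C\<close>; conversely the pullback along \<open>q\<^sub>S\<close> is a compatible
  linear-monomial homomorphism.\<close>

lemma code_ring_simps [simp]:
  "carrier (code_ring A) = {f. \<forall>c. c \<notin> A \<longrightarrow> \<not> f c}"
  "mult (code_ring A) = (\<lambda>f g c. f c \<and> g c)"
  "one (code_ring A) = (\<lambda>c. c \<in> A)"
  "zero (code_ring A) = (\<lambda>c. False)"
  "add (code_ring A) = (\<lambda>f g c. f c \<noteq> g c)"
  by (simp_all add: code_ring_def)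

lemma finite_cube: "finite (cube n)"
proof -
  have "cube n \<subseteq> (\<lambda>I i. i \<in> I) ` Pow {1..n}"
  proof
    fix c assume "c \<in> cube n"
    then have "c = (\<lambda>i. i \<in> {i. c i})" and "{i. c i} \<in> Pow {1..n}"
      by (auto simp: cube_def)
    then show "c \<in> (\<lambda>I i. i \<in> I) ` Pow {1..n}" by blast
  qed
  then show ?thesis by (rule finite_subset) simp
qed

lemma ring_hom_code_ring_mult:
  assumes "h \<in> ring_hom (code_ring A) (code_ring B)"
    and "f \<in> carrier (code_ring A)" and "g \<in> carrier (code_ring A)"
  shows "h (\<lambda>c. f c \<and> g c) = (\<lambda>c. h f c \<and> h g c)"
  using ring_hom_mult[OF assms] by simp

lemma ring_hom_code_ring_add:
  assumes "h \<in> ring_hom (code_ring A) (code_ring B)"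
    and "f \<in> carrier (code_ring A)" and "g \<in> carrier (code_ring A)"
  shows "h (\<lambda>c. f c \<noteq> g c) = (\<lambda>c. h f c \<noteq> h g c)"
  using ring_hom_add[OF assms] by simp

lemma ring_hom_code_ring_zero:
  assumes "h \<in> ring_hom (code_ring A) (code_ring B)"
  shows "h (\<lambda>c. False) = (\<lambda>c. False)"
  using ring_hom_code_ring_add[OF assms, of "\<lambda>c. False" "\<lambda>c. False"] by simp

lemma rho_in_carrier: "a \<in> A \<Longrightarrow> rho a \<in> carrier (code_ring A)"
  by (auto simp: rho_def)

lemma ring_hom_code_ring_indicator_point:
  assumes h: "h \<in> ring_hom (code_ring A) (code_ring B)"
    and "finite F" and "F \<subseteq> A" and "h (\<lambda>c. c \<in> F) b"
  shows "\<exists>a\<in>F. h (rho a) b"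
  using assms(2-4)
proof (induction F rule: finite_induct)
  case empty
  then show ?case using ring_hom_code_ring_zero[OF h] by simp
next
  case (insert a F)
  have "(\<lambda>c. c \<in> insert a F) = (\<lambda>c. (c \<in> F) \<noteq> rho a c)"
    using insert.hyps(2) by (auto simp: rho_def)
  moreover have "h (\<lambda>c. (c \<in> F) \<noteq> rho a c) = (\<lambda>c. h (\<lambda>c. c \<in> F) c \<noteq> h (rho a) c)"
    using insert.prems(1) by (intro ring_hom_code_ring_add[OF h]) (auto simp: rho_def)
  ultimately show ?case using insert by auto
qed

lemma ring_hom_code_ring_point_unique:
  assumes h: "h \<in> ring_hom (code_ring A) (code_ring B)"
    and "a \<in> A" and "a' \<in> A" and "h (rho a) b" and "h (rho a') b"
  shows "a = a'"
proof (rule ccontr)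
  assume "a \<noteq> a'"
  then have "(\<lambda>c. rho a c \<and> rho a' c) = (\<lambda>c. False)" by (auto simp: rho_def)
  then show False
    using ring_hom_code_ring_mult[OF h rho_in_carrier rho_in_carrier, of a a']
      ring_hom_code_ring_zero[OF h] assms(2-5) by metis
qed

lemma q_phi_point:
  assumes "finite A" and h: "h \<in> ring_hom (code_ring A) (code_ring B)" and "b \<in> B"
  shows "q_phi A h b \<in> A" and "h (rho (q_phi A h b)) b"
proof -
  have "h (\<lambda>c. c \<in> A) b" using ring_hom_one[OF h] \<open>b \<in> B\<close> by simp
  then have "\<exists>a\<in>A. h (rho a) b"
    using ring_hom_code_ring_indicator_point[OF h \<open>finite A\<close>] by blast
  then have "\<exists>!a. a \<in> A \<and> h (rho a) b"
    using ring_hom_code_ring_point_unique[OF h] by blast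
  then have "q_phi A h b \<in> A \<and> h (rho (q_phi A h b)) b"
    unfolding q_phi_def by (rule theI')
  then show "q_phi A h b \<in> A" and "h (rho (q_phi A h b)) b" by simp_all
qed

lemma ring_hom_code_ring_apply:
  assumes "finite A" and h: "h \<in> ring_hom (code_ring A) (code_ring B)" and "b \<in> B"
    and f: "f \<in> carrier (code_ring A)"
  shows "h f b = f (q_phi A h b)"
proof -
  let ?a = "q_phi A h b"
  have a: "?a \<in> A" and "h (rho ?a) b" using q_phi_point[OF assms(1-3)] by simp_all
  then have "h (\<lambda>c. f c \<and> rho ?a c) b = h f b"
    using ring_hom_code_ring_mult[OF h f rho_in_carrier[OF a]] by simp
  moreover have "(\<lambda>c. f c \<and> rho ?a c) = (if f ?a then rho ?a else (\<lambda>c. False))"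
    by (auto simp: rho_def)
  ultimately show ?thesis
    using \<open>h (rho ?a) b\<close> ring_hom_code_ring_zero[OF h] by (cases "f ?a") simp_all
qed

definition pullback :: "word set \<Rightarrow> (word \<Rightarrow> word) \<Rightarrow> (word \<Rightarrow> bool) \<Rightarrow> (word \<Rightarrow> bool)" where
  "pullback B q r = (\<lambda>c. c \<in> B \<and> r (q c))"

lemma pullback_ring_hom:
  assumes "q ` B \<subseteq> A"
  shows "pullback B q \<in> ring_hom (code_ring A) (code_ring B)"
  using assms by (intro ring_hom_memI) (auto simp: pullback_def)

lemma ring_hom_code_ring_eq_pullback:
  assumes "finite A" and h: "h \<in> ring_hom (code_ring A) (code_ring B)"
    and f: "f \<in> carrier (code_ring A)"
  shows "h f = pullback B (q_phi A h) f"
proof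
  fix b
  show "h f b = pullback B (q_phi A h) f b"
  proof (cases "b \<in> B")
    case True
    then show ?thesis using ring_hom_code_ring_apply[OF assms(1,2) True f] by (simp add: pullback_def)
  next
    case False
    then show ?thesis using ring_hom_closed[OF h f] by (simp add: pullback_def)
  qed
qed

lemma compatible_imp_q_phi_eq:
  assumes "C \<subseteq> cube n" and "D \<subseteq> cube m"
    and \<phi>: "\<phi> \<in> ring_hom (code_ring D) (code_ring C)"
    and \<tau>: "\<tau> \<in> ring_hom (Rn m) (Rn n)" and "compatible m D \<tau> \<phi>"
    and c: "c \<in> C"
  shows "q_phi D \<phi> c = q_phi (cube m) \<tau> c"
proof -
  have "finite D" using \<open>D \<subseteq> cube m\<close> finite_cube finite_subset by blast
  let ?d = "q_phi D \<phi> c" and ?one = "\<lambda>c. c \<in> D"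
  have d: "?d \<in> D" using q_phi_point(1)[OF \<open>finite D\<close> \<phi> c] .
  have r: "rho ?d \<in> carrier (Rn m)" using d \<open>D \<subseteq> cube m\<close> by (auto simp: Rn_def rho_def)
  have "act (rho ?d) ?one \<in> carrier (code_ring D)" by (auto simp: act_def)
  then have "\<phi> (act (rho ?d) ?one) c"
    using ring_hom_code_ring_apply[OF \<open>finite D\<close> \<phi> c] d by (simp add: act_def rho_def)
  moreover have "\<phi> (act (rho ?d) ?one) = act (\<tau> (rho ?d)) (\<phi> ?one)"
    using \<open>compatible m D \<tau> \<phi>\<close> r unfolding compatible_def by simp
  ultimately have "\<tau> (rho ?d) c" by (simp add: act_def)
  then have "rho ?d (q_phi (cube m) \<tau> c)"
    using ring_hom_code_ring_apply[OF finite_cube, of \<tau> m "cube n" c] \<tau> r c \<open>C \<subseteq> cube n\<close>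
    by (auto simp: Rn_def)
  then show ?thesis by (simp add: rho_def)
qed

lemma compatible_pullback:
  assumes "C \<subseteq> B" and "finite D"
    and \<phi>: "\<phi> \<in> ring_hom (code_ring D) (code_ring C)"
    and q: "\<forall>c\<in>C. q_phi D \<phi> c = q c"
  shows "compatible m D (pullback B q) \<phi>"
  unfolding compatible_def
proof (intro ballI)
  fix r f assume f: "f \<in> carrier (code_ring D)"
  have "act r f \<in> carrier (code_ring D)" using f by (auto simp: act_def)
  then show "\<phi> (act r f) = act (pullback B q r) (\<phi> f)"
    using ring_hom_code_ring_eq_pullback[OF \<open>finite D\<close> \<phi>] f q \<open>C \<subseteq> B\<close>
    by (auto simp: pullback_def act_def)
qed

definition sel_valid :: "nat \<Rightarrow> sel \<Rightarrow> bool" where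
  "sel_valid n s \<longleftrightarrow> (case s of Coord j \<Rightarrow> j \<in> {1..n} | Zero \<Rightarrow> True | U \<Rightarrow> True)"

definition monomial_of_sel :: "nat \<Rightarrow> sel \<Rightarrow> (word \<Rightarrow> bool)" where
  "monomial_of_sel n s = (case s of Coord j \<Rightarrow> xvar n j | Zero \<Rightarrow> \<zero>\<^bsub>Rn n\<^esub> | U \<Rightarrow> \<one>\<^bsub>Rn n\<^esub>)"

lemma valid_S_iff: "valid_S n m S \<longleftrightarrow> (\<forall>i\<in>{1..m}. sel_valid n (S i))"
  by (simp add: valid_S_def sel_valid_def)

lemma sel_valid_set: "{s. sel_valid n s} = Coord ` {1..n} \<union> {Zero, U}"
proof (intro equalityI subsetI)
  fix s assume "s \<in> {s. sel_valid n s}"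
  then show "s \<in> Coord ` {1..n} \<union> {Zero, U}" by (cases s) (auto simp: sel_valid_def)
qed (auto simp: sel_valid_def)

lemma linear_monomial_iff:
  "linear_monomial m n \<tau> \<longleftrightarrow>
     (\<exists>S. valid_S n m S \<and> (\<forall>i\<in>{1..m}. \<tau> (xvar m i) = monomial_of_sel n (S i)))"
proof -
  have "{xvar n j | j. j \<in> {1..n}} \<union> {\<zero>\<^bsub>Rn n\<^esub>, \<one>\<^bsub>Rn n\<^esub>}
      = monomial_of_sel n ` {s. sel_valid n s}"
    unfolding sel_valid_set image_Un image_image by (auto simp: monomial_of_sel_def)
  then have "linear_monomial m n \<tau> \<longleftrightarrow>
      (\<forall>i\<in>{1..m}. \<exists>s. sel_valid n s \<and> \<tau> (xvar m i) = monomial_of_sel n s)"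
    unfolding linear_monomial_def by auto
  also have "\<dots> \<longleftrightarrow>
      (\<exists>S. valid_S n m S \<and> (\<forall>i\<in>{1..m}. \<tau> (xvar m i) = monomial_of_sel n (S i)))"
    by (simp add: valid_S_iff bchoice_iff ball_conj_distrib)
  finally show ?thesis .
qed

lemma q_S_on_cube:
  "c \<in> cube n \<Longrightarrow> q_S m S c i \<longleftrightarrow> i \<in> {1..m} \<and> monomial_of_sel n (S i) c"
  by (cases "S i") (simp_all add: q_S_def monomial_of_sel_def xvar_def Rn_def)

lemma q_S_in_cube: "q_S m S c \<in> cube m"
  by (auto simp: q_S_def cube_def)

lemma q_phi_cube_coordinate:
  assumes \<tau>: "\<tau> \<in> ring_hom (Rn m) (Rn n)" and c: "c \<in> cube n"
  shows "q_phi (cube m) \<tau> c i \<longleftrightarrow> i \<in> {1..m} \<and> \<tau> (xvar m i) c"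
proof -
  have \<tau>': "\<tau> \<in> ring_hom (code_ring (cube m)) (code_ring (cube n))" using \<tau> by (simp add: Rn_def)
  let ?d = "q_phi (cube m) \<tau> c"
  have d: "?d \<in> cube m" using q_phi_point(1)[OF finite_cube \<tau>' c] .
  then have "?d i \<Longrightarrow> i \<in> {1..m}" unfolding cube_def by blast
  moreover have "\<tau> (xvar m i) c = xvar m i ?d"
    by (rule ring_hom_code_ring_apply[OF finite_cube \<tau>' c]) (simp add: xvar_def)
  ultimately show ?thesis using d by (auto simp: xvar_def)
qed

lemma q_phi_cube_eq_q_S:
  assumes "\<tau> \<in> ring_hom (Rn m) (Rn n)"
    and "\<forall>i\<in>{1..m}. \<tau> (xvar m i) = monomial_of_sel n (S i)" and "c \<in> cube n"
  shows "q_phi (cube m) \<tau> c = q_S m S c"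
proof
  fix i
  show "q_phi (cube m) \<tau> c i = q_S m S c i"
    unfolding q_phi_cube_coordinate[OF assms(1,3)] q_S_on_cube[OF assms(3)] using assms(2) by auto
qed

lemma pullback_q_S_xvar:
  assumes "i \<in> {1..m}"
  shows "pullback (cube n) (q_S m S) (xvar m i) = monomial_of_sel n (S i)"
proof
  fix c
  show "pullback (cube n) (q_S m S) (xvar m i) c = monomial_of_sel n (S i) c"
  proof (cases "c \<in> cube n")
    case True
    then show ?thesis using assms q_S_in_cube by (simp add: pullback_def xvar_def q_S_on_cube)
  next
    case False
    then show ?thesis by (simp add: pullback_def monomial_of_sel_def xvar_def Rn_def split: sel.split)
  qed
qed

theorem lemma7:
  fixes n m :: nat and C D :: "word set" and \<phi> :: "(word \<Rightarrow> bool) \<Rightarrow> (word \<Rightarrow> bool)"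
  assumes "C \<subseteq> cube n" and "D \<subseteq> cube m"
    and "\<phi> \<in> ring_hom (code_ring D) (code_ring C)"
  shows "neural_ring_hom n m C D \<phi> \<longleftrightarrow>
         (\<exists>S. valid_S n m S \<and> (\<forall>c \<in> C. q_phi D \<phi> c = q_S m S c))"
proof
  assume "neural_ring_hom n m C D \<phi>"
  then obtain \<tau> where \<tau>: "\<tau> \<in> ring_hom (Rn m) (Rn n)"
    and "linear_monomial m n \<tau>" and "compatible m D \<tau> \<phi>"
    unfolding neural_ring_hom_def by blast
  then obtain S where "valid_S n m S" and xvar: "\<forall>i\<in>{1..m}. \<tau> (xvar m i) = monomial_of_sel n (S i)"
    unfolding linear_monomial_iff by blast
  moreover have "q_phi D \<phi> c = q_S m S c" if "c \<in> C" for c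
  proof -
    have "q_phi D \<phi> c = q_phi (cube m) \<tau> c"
      using compatible_imp_q_phi_eq[OF assms \<tau> \<open>compatible m D \<tau> \<phi>\<close> that] .
    also have "\<dots> = q_S m S c"
      using q_phi_cube_eq_q_S[OF \<tau> xvar] that assms(1) by blast
    finally show ?thesis .
  qed
  ultimately show "\<exists>S. valid_S n m S \<and> (\<forall>c \<in> C. q_phi D \<phi> c = q_S m S c)" by blast
next
  assume "\<exists>S. valid_S n m S \<and> (\<forall>c \<in> C. q_phi D \<phi> c = q_S m S c)"
  then obtain S where S: "valid_S n m S" and q: "\<forall>c \<in> C. q_phi D \<phi> c = q_S m S c" by blast
  let ?\<tau> = "pullback (cube n) (q_S m S)"
  have "?\<tau> \<in> ring_hom (Rn m) (Rn n)"
    unfolding Rn_def using q_S_in_cube by (intro pullback_ring_hom) blast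
  moreover have "linear_monomial m n ?\<tau>"
    unfolding linear_monomial_iff using S pullback_q_S_xvar by blast
  moreover have "finite D" using assms(2) finite_cube finite_subset by blast
  then have "compatible m D ?\<tau> \<phi>" using compatible_pullback[OF assms(1) _ assms(3) q] by blast
  ultimately show "neural_ring_hom n m C D \<phi>"
    unfolding neural_ring_hom_def using assms(3) by blast
qed

end
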